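(* Let $T\subset\mathbb{R}^3$ be the tetrahedron with vertices $(0,0,0)$, $\left(\frac12,0,0\right)$, $\left(0,2+\sqrt2,0\right)$ and $\left(0,0,2-\sqrt2\right)$. Then for every positive integer $t$, \[ \#(tT\cap\mathbb{Z}^3)=\frac16t^3+t^2+\frac{11}{6}t+1. \] *)

theory Defs
  imports "HOL-Analysis.Analysis"
begin

definition tetT :: "(real ^ 3) set" where
  "tetT = convex hull {vector [0, 0, 0], vector [1/2, 0, 0],
                       vector [0, 2 + sqrt 2, 0], vector [0, 0, 2 - sqrt 2]}"

definition lattice_pt :: "int \<times> int \<times> int \<Rightarrow> real ^ 3" where
  "lattice_pt p = (case p of (a, b, c) \<Rightarrow> vector [real_of_int a, real_of_int b, real_of_int c])"

end

theory Submission
  imports Defs "HOL-Computational_Algebra.Nth_Powers"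
begin

text \<open>
  Up to scaling, \<open>T\<close> is the simplex \<open>x, y, z \<ge> 0, 2x + y/\<alpha> + z/\<beta> \<le> 1\<close> with
  \<open>\<alpha> = 2 + \<surd>2\<close>, \<open>\<beta> = 2 - \<surd>2\<close>, and the decisive fact is \<open>1/\<alpha> + 1/\<beta> = 2\<close>.
  Deleting the lattice points on the two axes from the triangle \<open>y/\<alpha> + z/\<beta> \<le> m\<close> and
  translating the rest by \<open>(-1, -1)\<close> yields exactly the triangle of level \<open>m - 2\<close>; likewise
  deleting the slice \<open>x = 0\<close> of the tetrahedron and translating by \<open>-1\<close> in \<open>x\<close> yields the
  tetrahedron of level \<open>m - 2\<close>. The axes carry \<open>\<lfloor>m\<beta>\<rfloor> + 1 + \<lfloor>m\<alpha>\<rfloor> = 4m\<close> points for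
  \<open>m \<ge> 1\<close>, because \<open>m\<surd>2\<close> is never an integer. So the triangle of level \<open>n\<close> has \<open>(n + 1)\<^sup>2\<close>
  lattice points, and summing over the slices gives \<open>(n + 1)(n + 2)(n + 3)/6\<close> for the tetrahedron.
\<close>

lemma convex_hull_axis_simplex:
  fixes a b c :: real
  assumes "a > 0" "b > 0" "c > 0"
  shows "convex hull {vector [0, 0, 0], vector [a, 0, 0], vector [0, b, 0], vector [0, 0, c]}
       = {v :: real^3. 0 \<le> v$1 \<and> 0 \<le> v$2 \<and> 0 \<le> v$3 \<and> v$1 / a + v$2 / b + v$3 / c \<le> 1}"
    (is "convex hull ?V = ?S")
proof
  have "convex ?S"
    unfolding convex_def
  proof (intro ballI allI impI)
    fix x y :: "real^3" and u w :: real
    assume x: "x \<in> ?S" and y: "y \<in> ?S" and uw: "0 \<le> u" "0 \<le> w" "u + w = 1"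
    have "u * (x$1 / a + x$2 / b + x$3 / c) + w * (y$1 / a + y$2 / b + y$3 / c) \<le> u * 1 + w * 1"
      using x y uw by (intro add_mono mult_left_mono) auto
    then show "u *\<^sub>R x + w *\<^sub>R y \<in> ?S"
      using x y uw by (simp add: add_divide_distrib algebra_simps)
  qed
  moreover have "?V \<subseteq> ?S"
    using assms by auto
  ultimately show "convex hull ?V \<subseteq> ?S"
    by (simp add: hull_minimal)
next
  show "?S \<subseteq> convex hull ?V"
  proof
    fix v :: "real^3"
    assume v: "v \<in> ?S"
    let ?P = "(!) [vector [0, 0, 0], vector [a, 0, 0], vector [0, b, 0], vector [0, 0, c]]"
    let ?L = "(!) [1 - (v$1 / a + v$2 / b + v$3 / c), v$1 / a, v$2 / b, v$3 / c]"
    have "(\<Sum>i\<in>{0..3}. ?L i *\<^sub>R ?P i) \<in> convex hull ?V"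
    proof (rule convex_sum)
      show "(\<Sum>i\<in>{0..3}. ?L i) = 1"
        by (simp add: numeral_3_eq_3)
      show "0 \<le> ?L i" "?P i \<in> convex hull ?V" if "i \<in> {0..3}" for i
        using that v assms by (auto simp: numeral_3_eq_3 le_Suc_eq hull_inc)
    qed auto
    moreover have "(\<Sum>i\<in>{0..3}. ?L i *\<^sub>R ?P i) = v"
      using assms by (simp add: numeral_3_eq_3 vec_eq_iff forall_3)
    ultimately show "v \<in> convex hull ?V"
      by simp
  qed
qed

lemma not_is_square_2: "\<not> is_square (2 :: int)"
proof
  assume "is_square (2 :: int)"
  then obtain y :: int where y: "y\<^sup>2 = 2"
    by (auto elim: is_nth_powerE)
  have "\<bar>y\<bar> \<le> 1 \<or> 2 \<le> \<bar>y\<bar>"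
    by linarith
  then show False
  proof
    assume "\<bar>y\<bar> \<le> 1"
    then have "y\<^sup>2 \<le> 1"
      by (simp add: abs_square_le_1)
    with y show False
      by simp
  next
    assume "2 \<le> \<bar>y\<bar>"
    then have "2\<^sup>2 \<le> \<bar>y\<bar>\<^sup>2"
      by (rule power_mono) simp
    with y show False
      by simp
  qed
qed

lemma of_int_mult_sqrt_2_notin_Ints:
  assumes "m \<noteq> 0"
  shows "real_of_int m * sqrt 2 \<notin> \<int>"
proof
  assume "real_of_int m * sqrt 2 \<in> \<int>"
  then obtain k where "real_of_int m * sqrt 2 = real_of_int k"
    by (elim Ints_cases)
  then have "real_of_int (k\<^sup>2) = (real_of_int m * sqrt 2)\<^sup>2"
    by simp
  also have "\<dots> = real_of_int (2 * m\<^sup>2)"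
    by (simp add: power_mult_distrib)
  finally have "real_of_int (2 * m\<^sup>2) = real_of_int (k\<^sup>2)" ..
  then have "is_square (2 * m\<^sup>2)"
    by (simp only: of_int_eq_iff) simp
  then have "is_square (2 :: int)"
    using assms by (subst (asm) is_nth_power_mult_cancel_right) auto
  with not_is_square_2 show False ..
qed

lemma floor_add_floor_diff_not_Ints:
  fixes x :: real
  assumes "x \<notin> \<int>"
  shows "\<lfloor>of_int k + x\<rfloor> + \<lfloor>of_int k - x\<rfloor> = 2 * k - 1"
proof -
  have "\<lfloor>of_int k + x\<rfloor> = k + \<lfloor>x\<rfloor>"
    by linarith
  moreover have "\<lfloor>of_int k - x\<rfloor> = k - \<lceil>x\<rceil>"
    by linarith
  moreover have "\<lceil>x\<rceil> = \<lfloor>x\<rfloor> + 1"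
    using assms ceiling_altdef[of x] by (metis Ints_of_int)
  ultimately show ?thesis
    by simp
qed

definition triangle_points :: "real \<Rightarrow> real \<Rightarrow> int \<Rightarrow> (int \<times> int) set" where
  "triangle_points \<alpha> \<beta> m = {(y, z). 0 \<le> y \<and> 0 \<le> z \<and> y / \<alpha> + z / \<beta> \<le> m}"

definition tetrahedron_points :: "real \<Rightarrow> real \<Rightarrow> int \<Rightarrow> (int \<times> int \<times> int) set" where
  "tetrahedron_points \<alpha> \<beta> m = {(x, y, z). 0 \<le> x \<and> (y, z) \<in> triangle_points \<alpha> \<beta> (m - 2 * x)}"

lemma triangle_points_mono: "m \<le> m' \<Longrightarrow> triangle_points \<alpha> \<beta> m \<subseteq> triangle_points \<alpha> \<beta> m'"
  unfolding triangle_points_def by auto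

lemma triangle_points_subset:
  assumes "\<alpha> > 0" "\<beta> > 0"
  shows "triangle_points \<alpha> \<beta> m \<subseteq> {0..\<lfloor>m * \<alpha>\<rfloor>} \<times> {0..\<lfloor>m * \<beta>\<rfloor>}"
proof safe
  fix y z
  assume "(y, z) \<in> triangle_points \<alpha> \<beta> m"
  then have "0 \<le> y" "0 \<le> z" "y / \<alpha> \<le> m" "z / \<beta> \<le> m"
    using assms unfolding triangle_points_def by (auto intro: order.trans[rotated])
  then show "y \<in> {0..\<lfloor>m * \<alpha>\<rfloor>}" "z \<in> {0..\<lfloor>m * \<beta>\<rfloor>}"
    using assms by (simp_all add: le_floor_iff pos_divide_le_eq)
qed

lemma finite_triangle_points: "\<alpha> > 0 \<Longrightarrow> \<beta> > 0 \<Longrightarrow> finite (triangle_points \<alpha> \<beta> m)"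
  by (rule finite_subset[OF triangle_points_subset]) auto

lemma triangle_points_eq_empty: "\<alpha> > 0 \<Longrightarrow> \<beta> > 0 \<Longrightarrow> m < 0 \<Longrightarrow> triangle_points \<alpha> \<beta> m = {}"
  using triangle_points_subset[of \<alpha> \<beta> m] by (fastforce simp: mult_neg_pos)

lemma triangle_points_peel:
  assumes "\<alpha> > 0" "\<beta> > 0" "1 / \<alpha> + 1 / \<beta> = 2"
  shows "triangle_points \<alpha> \<beta> m = {0} \<times> {0..\<lfloor>m * \<beta>\<rfloor>} \<union> {1..\<lfloor>m * \<alpha>\<rfloor>} \<times> {0}
           \<union> map_prod (\<lambda>y. y + 1) (\<lambda>z. z + 1) ` triangle_points \<alpha> \<beta> (m - 2)"
proof -
  have axis_y: "(y, 0) \<in> triangle_points \<alpha> \<beta> m \<longleftrightarrow> y \<in> {0..\<lfloor>m * \<alpha>\<rfloor>}" for y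
    using assms by (auto simp: triangle_points_def le_floor_iff pos_divide_le_eq)
  have axis_z: "(0, z) \<in> triangle_points \<alpha> \<beta> m \<longleftrightarrow> z \<in> {0..\<lfloor>m * \<beta>\<rfloor>}" for z
    using assms by (auto simp: triangle_points_def le_floor_iff pos_divide_le_eq)
  have inner: "(y, z) \<in> triangle_points \<alpha> \<beta> m \<longleftrightarrow> (y - 1, z - 1) \<in> triangle_points \<alpha> \<beta> (m - 2)"
    if "y > 0" "z > 0" for y z
  proof -
    have "(y - 1) / \<alpha> + (z - 1) / \<beta> = y / \<alpha> + z / \<beta> - 2"
      using assms(3) by (simp add: diff_divide_distrib)
    then show ?thesis
      using that unfolding triangle_points_def by auto
  qed
  have nonneg: "0 \<le> y \<and> 0 \<le> z" if "(y, z) \<in> triangle_points \<alpha> \<beta> k" for y z k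
    using that unfolding triangle_points_def by auto
  have shifted: "(y, z) \<in> map_prod (\<lambda>y. y + 1) (\<lambda>z. z + 1) ` S \<longleftrightarrow> (y - 1, z - 1) \<in> S" for y z :: int and S
    by (force simp: image_iff)
  show ?thesis
  proof (rule set_eqI, clarify)
    fix i j :: int
    show "(i, j) \<in> triangle_points \<alpha> \<beta> m \<longleftrightarrow> (i, j) \<in> {0} \<times> {0..\<lfloor>m * \<beta>\<rfloor>} \<union> {1..\<lfloor>m * \<alpha>\<rfloor>} \<times> {0}
           \<union> map_prod (\<lambda>y. y + 1) (\<lambda>z. z + 1) ` triangle_points \<alpha> \<beta> (m - 2)"
    proof (cases "i = 0"; cases "j = 0")
      assume "i \<noteq> 0" "j \<noteq> 0"
      then show ?thesis
        using inner[of i j] nonneg[of i j m] nonneg[of "i - 1" "j - 1" "m - 2"]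
        by (cases "i > 0 \<and> j > 0") (auto simp: shifted)
    qed (use axis_y axis_z nonneg[of "-1" "j - 1" "m - 2"] nonneg[of "i - 1" "-1" "m - 2"] assms
         in \<open>auto simp: shifted zero_le_mult_iff\<close>)
  qed
qed

lemma card_triangle_points_peel:
  assumes "\<alpha> > 0" "\<beta> > 0" "1 / \<alpha> + 1 / \<beta> = 2"
  shows "card (triangle_points \<alpha> \<beta> m)
           = nat (\<lfloor>m * \<beta>\<rfloor> + 1) + nat \<lfloor>m * \<alpha>\<rfloor> + card (triangle_points \<alpha> \<beta> (m - 2))"
proof -
  let ?A = "{0 :: int} \<times> {0..\<lfloor>m * \<beta>\<rfloor>}" and ?B = "{1..\<lfloor>m * \<alpha>\<rfloor>} \<times> {0 :: int}"
  let ?C = "map_prod (\<lambda>y. y + 1) (\<lambda>z. z + 1) ` triangle_points \<alpha> \<beta> (m - 2)"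
  have "finite ?C"
    using finite_triangle_points[OF assms(1,2)] by blast
  moreover have "(?A \<union> ?B) \<inter> ?C = {}"
    by (auto simp: triangle_points_def)
  ultimately have "card (?A \<union> ?B \<union> ?C) = card (?A \<union> ?B) + card ?C"
    by (subst card_Un_disjoint) auto
  also have "card (?A \<union> ?B) = card ?A + card ?B"
    by (subst card_Un_disjoint) auto
  also have "card ?C = card (triangle_points \<alpha> \<beta> (m - 2))"
    by (rule card_image) (auto simp: inj_on_def)
  finally show ?thesis
    using triangle_points_peel[OF assms, of m] by (simp add: card_cartesian_product)
qed

lemma tetrahedron_points_peel:
  "tetrahedron_points \<alpha> \<beta> m
     = Pair 0 ` triangle_points \<alpha> \<beta> m \<union> map_prod (\<lambda>x. x + 1) id ` tetrahedron_points \<alpha> \<beta> (m - 2)"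
proof (rule set_eqI, clarify)
  fix x y z :: int
  have shifted: "(x, y, z) \<in> map_prod (\<lambda>x. x + 1) id ` S \<longleftrightarrow> (x - 1, y, z) \<in> S" for S
    by force
  have "m - 2 - 2 * (x - 1) = m - 2 * x"
    by simp
  then show "(x, y, z) \<in> tetrahedron_points \<alpha> \<beta> m \<longleftrightarrow>
      (x, y, z) \<in> Pair 0 ` triangle_points \<alpha> \<beta> m \<union> map_prod (\<lambda>x. x + 1) id ` tetrahedron_points \<alpha> \<beta> (m - 2)"
    unfolding Un_iff shifted by (auto simp: tetrahedron_points_def)
qed

lemma tetrahedron_points_subset:
  assumes "\<alpha> > 0" "\<beta> > 0"
  shows "tetrahedron_points \<alpha> \<beta> m \<subseteq> {0..m} \<times> triangle_points \<alpha> \<beta> m"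
proof clarify
  fix x y z
  assume xyz: "(x, y, z) \<in> tetrahedron_points \<alpha> \<beta> m"
  then have "(y, z) \<in> triangle_points \<alpha> \<beta> (m - 2 * x)"
    by (simp add: tetrahedron_points_def)
  then have "0 \<le> m - 2 * x"
    using triangle_points_eq_empty[OF assms] by (metis empty_iff not_le)
  then show "x \<in> {0..m} \<and> (y, z) \<in> triangle_points \<alpha> \<beta> m"
    using xyz triangle_points_mono[of "m - 2 * x" m] by (auto simp: tetrahedron_points_def)
qed

lemma finite_tetrahedron_points: "\<alpha> > 0 \<Longrightarrow> \<beta> > 0 \<Longrightarrow> finite (tetrahedron_points \<alpha> \<beta> m)"
  by (rule finite_subset[OF tetrahedron_points_subset]) (auto simp: finite_triangle_points)

lemma tetrahedron_points_eq_empty: "\<alpha> > 0 \<Longrightarrow> \<beta> > 0 \<Longrightarrow> m < 0 \<Longrightarrow> tetrahedron_points \<alpha> \<beta> m = {}"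
  using tetrahedron_points_subset[of \<alpha> \<beta> m] by auto

lemma card_tetrahedron_points_peel:
  assumes "\<alpha> > 0" "\<beta> > 0"
  shows "card (tetrahedron_points \<alpha> \<beta> m)
           = card (triangle_points \<alpha> \<beta> m) + card (tetrahedron_points \<alpha> \<beta> (m - 2))"
proof -
  let ?S = "Pair (0 :: int) ` triangle_points \<alpha> \<beta> m"
  let ?T = "map_prod (\<lambda>x. x + 1) id ` tetrahedron_points \<alpha> \<beta> (m - 2)"
  have "card (?S \<union> ?T) = card ?S + card ?T"
  proof (rule card_Un_disjoint)
    show "?S \<inter> ?T = {}"
      by (auto simp: tetrahedron_points_def)
  qed (simp_all add: finite_triangle_points finite_tetrahedron_points assms)
  then have "card (tetrahedron_points \<alpha> \<beta> m) = card ?S + card ?T"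
    by (simp only: tetrahedron_points_peel[of \<alpha> \<beta> m])
  also have "card ?S = card (triangle_points \<alpha> \<beta> m)"
    by (rule card_image) (simp add: inj_on_def)
  also have "card ?T = card (tetrahedron_points \<alpha> \<beta> (m - 2))"
    by (rule card_image) (auto simp: inj_on_def)
  finally show ?thesis .
qed

lemma two_minus_sqrt_2_pos: "0 < 2 - sqrt (2 :: real)"
  using real_less_lsqrt[of 2 2] by simp

lemma two_plus_sqrt_2_pos: "0 < 2 + sqrt (2 :: real)"
  by (simp add: add_pos_nonneg)

lemmas two_pm_sqrt_2_pos = two_plus_sqrt_2_pos two_minus_sqrt_2_pos

lemma inverse_add_inverse_2_pm_sqrt_2: "1 / (2 + sqrt 2) + 1 / (2 - sqrt 2) = (2 :: real)"
proof -
  have "(2 + sqrt 2) * (2 - sqrt 2) = (2 :: real)"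
    by (simp add: algebra_simps)
  with two_pm_sqrt_2_pos have "1 / (2 + sqrt 2) = (2 - sqrt 2) / 2" "1 / (2 - sqrt 2) = (2 + sqrt 2) / 2"
    by (simp_all add: field_simps)
  then show ?thesis
    by simp
qed

lemma card_triangle_points_sqrt_2_peel:
  assumes "m > 0"
  shows "card (triangle_points (2 + sqrt 2) (2 - sqrt 2) m)
           = nat (4 * m) + card (triangle_points (2 + sqrt 2) (2 - sqrt 2) (m - 2))"
proof -
  have "m * (2 + sqrt 2) = of_int (2 * m) + m * sqrt 2" "m * (2 - sqrt 2) = of_int (2 * m) - m * sqrt 2"
    by (simp_all add: algebra_simps)
  then have "\<lfloor>m * (2 + sqrt 2)\<rfloor> + \<lfloor>m * (2 - sqrt 2)\<rfloor> = 4 * m - 1"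
    using floor_add_floor_diff_not_Ints[OF of_int_mult_sqrt_2_notin_Ints, of m "2 * m"] assms by simp
  moreover have "0 \<le> \<lfloor>m * (2 - sqrt 2)\<rfloor>" "0 \<le> \<lfloor>m * (2 + sqrt 2)\<rfloor>"
    using assms two_minus_sqrt_2_pos by simp_all
  moreover have "nat (a + 1) + nat b = nat (4 * m)" if "b + a = 4 * m - 1" "0 \<le> a" "0 \<le> b" for a b
    using that by (simp add: nat_add_distrib [symmetric])
  ultimately have "nat (\<lfloor>m * (2 - sqrt 2)\<rfloor> + 1) + nat \<lfloor>m * (2 + sqrt 2)\<rfloor> = nat (4 * m)"
    by presburger
  with card_triangle_points_peel[OF two_pm_sqrt_2_pos inverse_add_inverse_2_pm_sqrt_2, of m]
  show ?thesis
    by simp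
qed

lemma card_triangle_points_sqrt_2:
  "card (triangle_points (2 + sqrt 2) (2 - sqrt 2) (int n)) = (n + 1)\<^sup>2"
proof (induction n rule: nat_induct2)
  case 0
  show ?case
    using card_triangle_points_peel[OF two_pm_sqrt_2_pos inverse_add_inverse_2_pm_sqrt_2, of 0]
      triangle_points_eq_empty[OF two_pm_sqrt_2_pos, of "-2"]
    by simp
next
  case 1
  show ?case
    using card_triangle_points_sqrt_2_peel[of 1] triangle_points_eq_empty[OF two_pm_sqrt_2_pos, of "-1"]
    by (simp add: power2_eq_square)
next
  case (step n)
  have "int (n + 2) - 2 = int n"
    by simp
  then show ?case
    using card_triangle_points_sqrt_2_peel[of "int (n + 2)"] step by (simp add: power2_eq_square)
qed

lemma card_tetrahedron_points_sqrt_2: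
  "6 * card (tetrahedron_points (2 + sqrt 2) (2 - sqrt 2) (int n)) = (n + 1) * (n + 2) * (n + 3)"
proof (induction n rule: nat_induct2)
  case 0
  show ?case
    using card_tetrahedron_points_peel[OF two_pm_sqrt_2_pos, of 0]
      card_triangle_points_sqrt_2[of 0] tetrahedron_points_eq_empty[OF two_pm_sqrt_2_pos, of "-2"]
    by simp
next
  case 1
  show ?case
    using card_tetrahedron_points_peel[OF two_pm_sqrt_2_pos, of 1]
      card_triangle_points_sqrt_2[of 1] tetrahedron_points_eq_empty[OF two_pm_sqrt_2_pos, of "-1"]
    by (simp add: power2_eq_square)
next
  case (step n)
  have "int (n + 2) - 2 = int n"
    by simp
  then show ?case
    using card_tetrahedron_points_peel[OF two_pm_sqrt_2_pos, of "int (n + 2)"]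
      card_triangle_points_sqrt_2[of "n + 2"] step
    by (simp add: power2_eq_square algebra_simps)
qed

lemma scaleR_vector_3: "c *\<^sub>R vector [a, b, d] = (vector [c * a, c * b, c * d] :: real^3)"
  by (simp add: vec_eq_iff forall_3)

lemma scaleR_image_tetT:
  assumes "c > 0"
  shows "(\<lambda>v. c *\<^sub>R v) ` tetT
           = {v. 0 \<le> v$1 \<and> 0 \<le> v$2 \<and> 0 \<le> v$3 \<and> 2 * v$1 + v$2 / (2 + sqrt 2) + v$3 / (2 - sqrt 2) \<le> c}"
proof -
  have rescale: "v$1 / (c / 2) + v$2 / (c * (2 + sqrt 2)) + v$3 / (c * (2 - sqrt 2)) \<le> 1
               \<longleftrightarrow> 2 * v$1 + v$2 / (2 + sqrt 2) + v$3 / (2 - sqrt 2) \<le> c" for v :: "real^3"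
  proof -
    have "v$1 / (c / 2) + v$2 / (c * (2 + sqrt 2)) + v$3 / (c * (2 - sqrt 2))
          = (2 * v$1 + v$2 / (2 + sqrt 2) + v$3 / (2 - sqrt 2)) / c"
      using assms by (simp add: add_divide_distrib mult.commute)
    then show ?thesis
      using assms by (simp add: pos_divide_le_eq)
  qed
  have "(\<lambda>v. c *\<^sub>R v) ` tetT = convex hull {vector [0, 0, 0], vector [c / 2, 0, 0],
          vector [0, c * (2 + sqrt 2), 0], vector [0, 0, c * (2 - sqrt 2)]}"
    unfolding tetT_def convex_hull_scaling [symmetric] by (simp add: scaleR_vector_3)
  also have "\<dots> = {v. 0 \<le> v$1 \<and> 0 \<le> v$2 \<and> 0 \<le> v$3
                      \<and> v$1 / (c / 2) + v$2 / (c * (2 + sqrt 2)) + v$3 / (c * (2 - sqrt 2)) \<le> 1}"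
    using assms two_pm_sqrt_2_pos by (intro convex_hull_axis_simplex) auto
  finally show ?thesis
    unfolding rescale .
qed

lemma lattice_points_scaleR_image_tetT:
  assumes "t > 0"
  shows "{p. lattice_pt p \<in> (\<lambda>v. real t *\<^sub>R v) ` tetT}
           = tetrahedron_points (2 + sqrt 2) (2 - sqrt 2) (int t)"
  using assms
  by (auto simp: scaleR_image_tetT lattice_pt_def tetrahedron_points_def triangle_points_def algebra_simps)

theorem proposition3p4:
  fixes t :: nat
  assumes "t > 0"
  shows "real (card {p :: int \<times> int \<times> int. lattice_pt p \<in> (\<lambda>x. real t *\<^sub>R x) ` tetT})
           = (1/6) * real t ^ 3 + real t ^ 2 + (11/6) * real t + 1"
proof -
  have "6 * real (card {p. lattice_pt p \<in> (\<lambda>x. real t *\<^sub>R x) ` tetT})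
          = real ((t + 1) * (t + 2) * (t + 3))"
    unfolding lattice_points_scaleR_image_tetT[OF assms] card_tetrahedron_points_sqrt_2 [symmetric] by simp
  then show ?thesis
    by (simp add: algebra_simps power3_eq_cube power2_eq_square)
qed

end
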